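(* (1) Let $\mathbf s:\mathcal X\to\{0,1\}^m$ be a selection rule and $\mathbf s':\{0,1\}^m\times\mathcal X\to\{0,1\}^m$ an extended selection rule such that $\mathbf s'(\mathbf w,\mathbf X)\preceq\mathbf w$ for all $\mathbf w\in\{0,1\}^m$. If both $\mathbf s$ and $\mathbf s'$ are stable, then the composition $\mathbf s'\circ\mathbf s$, defined by $(\mathbf s'\circ\mathbf s)(\mathbf X)=\mathbf s'(\mathbf s(\mathbf X),\mathbf X)$, is stable. (2) Let $\mathbf s,\mathbf s':\mathcal X\to\{0,1\}^m$ be two selection rules. If both are stable, then their intersection $\mathbf s\cap\mathbf s'$, defined as the componentwise product $(\mathbf s\cap\mathbf s')_i(\mathbf X)=s_i(\mathbf X)s_i'(\mathbf X)$, is stable.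
   Context: Data $\mathbf X=(X_0,X_1,\dots,X_m)\in\mathcal X$, where $X_i$ is the data for task $i$ and $X_0$ is extra data; $\mathbf X_{-i}$ denotes $\mathbf X$ with $X_i$ removed (it includes $X_0$). Selection rules are deterministic. A selection rule $\mathbf s:\mathcal X\to\{0,1\}^m$ is stable if for every $i$, $\mathbf S_{-i}=\mathbf s_{-i}(\mathbf X)$ is variationally independent of $X_i$ given $S_i=1$ and $\mathbf X_{-i}$; concretely, for all $\mathbf x,\mathbf x'\in\mathcal X$ with $\mathbf x_{-i}=\mathbf x'_{-i}$ and $s_i(\mathbf x)=s_i(\mathbf x')=1$, one has $\mathbf s(\mathbf x)=\mathbf s(\mathbf x')$. An extended selection rule $\mathbf s':\{0,1\}^m\times\mathcal X\to\{0,1\}^m$ is stable if $\mathbf s'(\mathbf w,\cdot)$ is stable for every $\mathbf w\in\{0,1\}^m$. $\mathbf S\preceq\mathbf S'$ means componentwise $\le$. *)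

theory Defs
  imports Main
begin

(* Tasks are indexed by a finite type 'i (so m = CARD('i)); the data vector
   X = (X_0, X_1, ..., X_m) is a function 'i option => 'a, where None is the
   index 0 (extra data) and Some i is task i.  Selection vectors in {0,1}^m are 'i => bool;
   the order on 'i => bool is the componentwise order. *)

definition stable ::
  "('i option \<Rightarrow> 'a) set \<Rightarrow> (('i option \<Rightarrow> 'a) \<Rightarrow> 'i \<Rightarrow> bool) \<Rightarrow> bool" where
  "stable Xs s \<longleftrightarrow>
     (\<forall>i. \<forall>x\<in>Xs. \<forall>x'\<in>Xs.
        (\<forall>j. j \<noteq> Some i \<longrightarrow> x j = x' j) \<and> s x i \<and> s x' i \<longrightarrow> s x = s x')"

definition stable_ext ::
  "('i option \<Rightarrow> 'a) set \<Rightarrow> (('i \<Rightarrow> bool) \<Rightarrow> ('i option \<Rightarrow> 'a) \<Rightarrow> 'i \<Rightarrow> bool) \<Rightarrow> bool" where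
  "stable_ext Xs s' \<longleftrightarrow> (\<forall>w. stable Xs (s' w))"

definition compose_sel ::
  "(('i \<Rightarrow> bool) \<Rightarrow> ('i option \<Rightarrow> 'a) \<Rightarrow> 'i \<Rightarrow> bool) \<Rightarrow> (('i option \<Rightarrow> 'a) \<Rightarrow> 'i \<Rightarrow> bool)
     \<Rightarrow> ('i option \<Rightarrow> 'a) \<Rightarrow> 'i \<Rightarrow> bool" where
  "compose_sel s' s = (\<lambda>x. s' (s x) x)"

definition inter_sel ::
  "(('i option \<Rightarrow> 'a) \<Rightarrow> 'i \<Rightarrow> bool) \<Rightarrow> (('i option \<Rightarrow> 'a) \<Rightarrow> 'i \<Rightarrow> bool)
     \<Rightarrow> ('i option \<Rightarrow> 'a) \<Rightarrow> 'i \<Rightarrow> bool" where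
  "inter_sel s s' = (\<lambda>x i. s x i \<and> s' x i)"

end

theory Submission
  imports Defs
begin

lemma stableI:
  assumes "\<And>i x x'. \<lbrakk>x \<in> Xs; x' \<in> Xs; \<forall>j. j \<noteq> Some i \<longrightarrow> x j = x' j; s x i; s x' i\<rbrakk>
             \<Longrightarrow> s x = s x'"
  shows "stable Xs s"
  using assms unfolding stable_def by blast

lemma stableD:
  assumes "stable Xs s" "x \<in> Xs" "x' \<in> Xs" "\<forall>j. j \<noteq> Some i \<longrightarrow> x j = x' j" "s x i" "s x' i"
  shows "s x = s x'"
  using assms unfolding stable_def by blast

lemma stable_ext_stable: "stable_ext Xs s' \<Longrightarrow> stable Xs (s' w)"
  unfolding stable_ext_def by blast

lemma stable_compose_sel:
  assumes s: "stable Xs s" and s': "stable_ext Xs s'"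
    and shrinking: "\<And>w x. x \<in> Xs \<Longrightarrow> s' w x \<le> w"
  shows "stable Xs (compose_sel s' s)"
proof (rule stableI)
  fix i x x'
  assume x: "x \<in> Xs" and x': "x' \<in> Xs" and agree: "\<forall>j. j \<noteq> Some i \<longrightarrow> x j = x' j"
    and sel: "compose_sel s' s x i" and sel': "compose_sel s' s x' i"
  have "s x i" using sel shrinking[OF x, of "s x"] unfolding compose_sel_def by (auto dest: le_funD)
  moreover have "s x' i"
    using sel' shrinking[OF x', of "s x'"] unfolding compose_sel_def by (auto dest: le_funD)
  ultimately have same_input: "s x = s x'" using stableD[OF s x x' agree] by blast
  have "s' (s x) x = s' (s x) x'"
    using stableD[OF stable_ext_stable[OF s'] x x' agree] sel sel' same_input
    unfolding compose_sel_def by simp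
  then show "compose_sel s' s x = compose_sel s' s x'"
    unfolding compose_sel_def by (simp add: same_input)
qed

lemma stable_inter_sel:
  assumes s: "stable Xs s" and s': "stable Xs s'"
  shows "stable Xs (inter_sel s s')"
proof (rule stableI)
  fix i x x'
  assume x: "x \<in> Xs" and x': "x' \<in> Xs" and agree: "\<forall>j. j \<noteq> Some i \<longrightarrow> x j = x' j"
    and "inter_sel s s' x i" "inter_sel s s' x' i"
  then have "s x i" "s x' i" "s' x i" "s' x' i" unfolding inter_sel_def by auto
  then have "s x = s x'" "s' x = s' x'"
    using stableD[OF s x x' agree] stableD[OF s' x x' agree] by auto
  then show "inter_sel s s' x = inter_sel s s' x'" unfolding inter_sel_def by simp
qed

theorem proposition2:
  fixes Xs :: "('i::finite option \<Rightarrow> 'a) set"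
  shows "(\<forall>(s :: ('i option \<Rightarrow> 'a) \<Rightarrow> 'i \<Rightarrow> bool) s'.
            stable Xs s \<and> stable_ext Xs s' \<and> (\<forall>w. \<forall>x\<in>Xs. s' w x \<le> w)
            \<longrightarrow> stable Xs (compose_sel s' s))
       \<and> (\<forall>(s :: ('i option \<Rightarrow> 'a) \<Rightarrow> 'i \<Rightarrow> bool) s'.
            stable Xs s \<and> stable Xs s' \<longrightarrow> stable Xs (inter_sel s s'))"
  by (blast intro: stable_compose_sel stable_inter_sel)

end
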